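(* Let $G$ be a finite group and suppose there is an element $s \in G$ such that $\mathcal{M}(G,s) = \{H\}$ and $H$ is core-free in $G$. Then $b(G,G/H)$ equals the minimal size of a total dominating set for $\Gamma(G)$ consisting only of conjugates of $s$.
   Context: $G^{\#}$ is the set of non-identity elements of $G$. The generating graph $\Gamma(G)$ has vertex set $G^{\#}$, with $x,y$ adjacent iff $G=\langle x,y\rangle$. A subset $S\subseteq G^{\#}$ is a total dominating set for $\Gamma(G)$ if for every $g\in G^{\#}$ there exists $s\in S$ with $G=\langle g,s\rangle$. $\mathcal{M}(G,g)$ denotes the set of maximal subgroups of $G$ containing $g$. For a group acting faithfully on a finite set $\Omega$, a base is a subset of $\Omega$ whose pointwise stabiliser is trivial, and $b(G,\Omega)$ is the minimal size of a base; $G/H$ is the set of right cosets of $H$ with $G$ acting by right multiplication (faithful when $H$ is core-free). *)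

theory Defs
  imports "HOL-Algebra.Algebra"
begin

definition maximal_subgroup :: "('a, 'b) monoid_scheme \<Rightarrow> 'a set \<Rightarrow> bool" where
  "maximal_subgroup G H \<longleftrightarrow> subgroup H G \<and> H \<noteq> carrier G \<and>
     (\<forall>K. subgroup K G \<and> H \<subseteq> K \<longrightarrow> K = H \<or> K = carrier G)"

definition max_subgroups_containing :: "('a, 'b) monoid_scheme \<Rightarrow> 'a \<Rightarrow> 'a set set" where
  "max_subgroups_containing G g = {H. maximal_subgroup G H \<and> g \<in> H}"

definition core_free :: "('a, 'b) monoid_scheme \<Rightarrow> 'a set \<Rightarrow> bool" where
  "core_free G H \<longleftrightarrow>
     (\<Inter>g\<in>carrier G. {g \<otimes>\<^bsub>G\<^esub> h \<otimes>\<^bsub>G\<^esub> inv\<^bsub>G\<^esub> g | h. h \<in> H}) = {\<one>\<^bsub>G\<^esub>}"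

definition nonid :: "('a, 'b) monoid_scheme \<Rightarrow> 'a set" where
  "nonid G = carrier G - {\<one>\<^bsub>G\<^esub>}"

definition total_dominating :: "('a, 'b) monoid_scheme \<Rightarrow> 'a set \<Rightarrow> bool" where
  "total_dominating G S \<longleftrightarrow> S \<subseteq> nonid G \<and>
     (\<forall>g\<in>nonid G. \<exists>x\<in>S. generate G {g, x} = carrier G)"

definition conjugates :: "('a, 'b) monoid_scheme \<Rightarrow> 'a \<Rightarrow> 'a set" where
  "conjugates G s = {g \<otimes>\<^bsub>G\<^esub> s \<otimes>\<^bsub>G\<^esub> inv\<^bsub>G\<^esub> g | g. g \<in> carrier G}"

definition min_conj_tds :: "('a, 'b) monoid_scheme \<Rightarrow> 'a \<Rightarrow> nat" where
  "min_conj_tds G s = (LEAST n. \<exists>S. S \<subseteq> conjugates G s \<and> total_dominating G S \<and> card S = n)"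

text \<open>Action of G on right cosets G/H by right multiplication; a base is a set of cosets
  whose pointwise stabiliser is trivial.\<close>
definition is_coset_base :: "('a, 'b) monoid_scheme \<Rightarrow> 'a set \<Rightarrow> 'a set set \<Rightarrow> bool" where
  "is_coset_base G H B \<longleftrightarrow> B \<subseteq> rcosets\<^bsub>G\<^esub> H \<and>
     {g \<in> carrier G. \<forall>C\<in>B. C #>\<^bsub>G\<^esub> g = C} = {\<one>\<^bsub>G\<^esub>}"

definition base_size :: "('a, 'b) monoid_scheme \<Rightarrow> 'a set \<Rightarrow> nat" where
  "base_size G H = (LEAST n. \<exists>B. is_coset_base G H B \<and> card B = n)"

end

theory Submission
  imports Defs
begin

text \<open>The unique maximal subgroup containing a conjugate \<open>g s g\<inverse>\<close> is \<open>g H g\<inverse>\<close>, which is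
  also the stabiliser of the coset \<open>H g\<inverse>\<close>. So a non-identity element generates \<open>G\<close> together
  with \<open>g s g\<inverse>\<close> exactly when it moves \<open>H g\<inverse>\<close>, and \<open>g s g\<inverse> \<mapsto> H g\<inverse>\<close> turns total
  dominating sets of conjugates of \<open>s\<close> into bases and back without increasing their size.
  Core-freeness of \<open>H\<close> is what makes a base exist at all.\<close>

lemma Least_card_eq_if_mutually_dominated:
  fixes P :: "'a set \<Rightarrow> bool" and Q :: "'b set \<Rightarrow> bool"
  assumes "P A\<^sub>0"
    and P_to_Q: "\<And>A. P A \<Longrightarrow> \<exists>B. Q B \<and> card B \<le> card A"
    and Q_to_P: "\<And>B. Q B \<Longrightarrow> \<exists>A. P A \<and> card A \<le> card B"
  shows "(LEAST n. \<exists>A. P A \<and> card A = n) = (LEAST n. \<exists>B. Q B \<and> card B = n)"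
    (is "?m = ?k")
proof -
  obtain B\<^sub>0 where "Q B\<^sub>0" using P_to_Q \<open>P A\<^sub>0\<close> by blast
  obtain A where A: "P A" "card A = ?m"
    using LeastI_ex[of "\<lambda>n. \<exists>A. P A \<and> card A = n"] \<open>P A\<^sub>0\<close> by blast
  obtain B where B: "Q B" "card B = ?k"
    using LeastI_ex[of "\<lambda>n. \<exists>B. Q B \<and> card B = n"] \<open>Q B\<^sub>0\<close> by blast
  obtain A' where A': "P A'" "card A' \<le> ?k" using Q_to_P B by metis
  obtain B' where B': "Q B'" "card B' \<le> ?m" using P_to_Q A by metis
  have "?m \<le> card A'" using A'(1) by (intro Least_le) blast
  moreover have "?k \<le> card B'" using B'(1) by (intro Least_le) blast
  ultimately show ?thesis using A'(2) B'(2) by linarith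
qed

context group
begin

lemma inv_conj_conj:
  "g \<in> carrier G \<Longrightarrow> y \<in> carrier G \<Longrightarrow> inv g \<otimes> (g \<otimes> y \<otimes> inv g) \<otimes> g = y"
  by (simp add: m_assoc[symmetric]) (simp add: m_assoc)

lemma conj_eq_one_iff:
  assumes "g \<in> carrier G" "y \<in> carrier G"
  shows "g \<otimes> y \<otimes> inv g = \<one> \<longleftrightarrow> y = \<one>"
proof
  assume "g \<otimes> y \<otimes> inv g = \<one>"
  then have "inv g \<otimes> (g \<otimes> y \<otimes> inv g) \<otimes> g = \<one>" using assms by simp
  then show "y = \<one>" using inv_conj_conj assms by simp
qed (use assms in simp)

lemma conj_set_eq: "{g \<otimes> h \<otimes> inv g | h. h \<in> A} = g <# A #> inv g"
  unfolding l_coset_def r_coset_def by blast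

lemma conj_set_mono: "A \<subseteq> B \<Longrightarrow> g <# A #> inv g \<subseteq> g <# B #> inv g"
  unfolding l_coset_def r_coset_def by blast

lemma conj_mem_conj_set_iff:
  assumes "g \<in> carrier G" "y \<in> carrier G" "A \<subseteq> carrier G"
  shows "g \<otimes> y \<otimes> inv g \<in> g <# A #> inv g \<longleftrightarrow> y \<in> A"
  using assms by (auto simp: l_coset_def r_coset_def)

lemma conj_set_carrier: "g \<in> carrier G \<Longrightarrow> g <# carrier G #> inv g = carrier G"
  by (simp add: coset_join2 coset_join3 subgroup_self)

lemma maximal_subgroup_conj:
  assumes g: "g \<in> carrier G" and M: "maximal_subgroup G M"
  shows "maximal_subgroup G (g <# M #> inv g)"
proof -
  have sM: "subgroup M G" and MC: "M \<subseteq> carrier G" and proper: "M \<noteq> carrier G"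
    and max: "\<And>K. subgroup K G \<Longrightarrow> M \<subseteq> K \<Longrightarrow> K = M \<or> K = carrier G"
    using M subgroup.subset unfolding maximal_subgroup_def by auto
  have undo: "inv g <# (g <# K #> inv g) #> g = K" if "K \<subseteq> carrier G" for K
    using subgroup_conjugation_is_surj0[of "inv g" K] g that by simp
  show ?thesis unfolding maximal_subgroup_def
  proof (intro conjI allI impI)
    show "subgroup (g <# M #> inv g) G" using subgroup_conjugation_is_surj2[OF g sM] .
    show "g <# M #> inv g \<noteq> carrier G"
      using undo[OF MC] undo[of "carrier G"] conj_set_carrier g proper by force
    fix K assume K: "subgroup K G \<and> g <# M #> inv g \<subseteq> K"
    then have KC: "K \<subseteq> carrier G" using subgroup.subset by blast
    have "M \<subseteq> inv g <# K #> g"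
      using conj_set_mono[of "g <# M #> inv g" K "inv g"] K undo[OF MC] g by simp
    then have "inv g <# K #> g = M \<or> inv g <# K #> g = carrier G"
      using max subgroup_conjugation_is_surj1 g K by blast
    then show "K = g <# M #> inv g \<or> K = carrier G"
      using subgroup_conjugation_is_surj0[OF g KC] conj_set_carrier g by force
  qed
qed

lemma exists_maximal_subgroup:
  assumes fin: "finite (carrier G)" and K: "subgroup K G" "K \<noteq> carrier G"
  obtains M where "maximal_subgroup G M" "K \<subseteq> M"
proof -
  let ?proper = "{M. subgroup M G \<and> M \<noteq> carrier G}"
  have "?proper \<subseteq> Pow (carrier G)" using subgroup.subset by blast
  then have "finite ?proper" using fin finite_subset by blast
  then obtain M where M: "M \<in> ?proper" "K \<subseteq> M" and top: "\<forall>L\<in>?proper. M \<subseteq> L \<longrightarrow> M = L"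
    using finite_has_maximal2[of ?proper K] K by blast
  have "maximal_subgroup G M"
    unfolding maximal_subgroup_def using M top by blast
  then show thesis using that M(2) by blast
qed

lemma generate_eq_carrier_iff:
  assumes fin: "finite (carrier G)" and A: "A \<subseteq> carrier G"
  shows "generate G A = carrier G \<longleftrightarrow> (\<forall>M. maximal_subgroup G M \<longrightarrow> \<not> A \<subseteq> M)"
proof
  assume gen: "generate G A = carrier G"
  show "\<forall>M. maximal_subgroup G M \<longrightarrow> \<not> A \<subseteq> M"
  proof (intro allI impI notI)
    fix M assume "maximal_subgroup G M" "A \<subseteq> M"
    then show False
      using generate_subgroup_incl[of A M] gen subgroup.subset
      unfolding maximal_subgroup_def by blast
  qed
next
  assume none: "\<forall>M. maximal_subgroup G M \<longrightarrow> \<not> A \<subseteq> M"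
  show "generate G A = carrier G"
  proof (rule ccontr)
    assume "generate G A \<noteq> carrier G"
    then obtain M where "maximal_subgroup G M" "generate G A \<subseteq> M"
      using exists_maximal_subgroup[OF fin generate_is_subgroup[OF A]] by blast
    then show False using none generate.incl[of _ A G] by blast
  qed
qed

lemma generate_pair_eq_carrier_iff:
  assumes "finite (carrier G)" "a \<in> carrier G" "x \<in> carrier G"
    and "max_subgroups_containing G x = {M}"
  shows "generate G {a, x} = carrier G \<longleftrightarrow> a \<notin> M"
  using assms generate_eq_carrier_iff[of "{a, x}"]
  unfolding max_subgroups_containing_def by blast

lemma max_subgroups_containing_conj:
  assumes g: "g \<in> carrier G" and x: "x \<in> carrier G"
  shows "max_subgroups_containing G (g \<otimes> x \<otimes> inv g) =
    (\<lambda>M. g <# M #> inv g) ` max_subgroups_containing G x"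
proof (intro equalityI subsetI)
  fix N assume "N \<in> max_subgroups_containing G (g \<otimes> x \<otimes> inv g)"
  then have N: "maximal_subgroup G N" "g \<otimes> x \<otimes> inv g \<in> N"
    unfolding max_subgroups_containing_def by auto
  have NC: "N \<subseteq> carrier G" using N(1) subgroup.subset unfolding maximal_subgroup_def by blast
  let ?M = "inv g <# N #> g"
  have "maximal_subgroup G ?M" using maximal_subgroup_conj[of "inv g" N] g N(1) by simp
  moreover have "x \<in> ?M"
    using conj_mem_conj_set_iff[of "inv g" "g \<otimes> x \<otimes> inv g" N] g x NC N(2)
    by (simp add: inv_conj_conj)
  moreover have "N = g <# ?M #> inv g" using subgroup_conjugation_is_surj0[OF g NC] by simp
  ultimately show "N \<in> (\<lambda>M. g <# M #> inv g) ` max_subgroups_containing G x"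
    unfolding max_subgroups_containing_def by blast
next
  fix N assume "N \<in> (\<lambda>M. g <# M #> inv g) ` max_subgroups_containing G x"
  then obtain M where M: "maximal_subgroup G M" "x \<in> M" and N: "N = g <# M #> inv g"
    unfolding max_subgroups_containing_def by blast
  have "M \<subseteq> carrier G" using M(1) subgroup.subset unfolding maximal_subgroup_def by blast
  then show "N \<in> max_subgroups_containing G (g \<otimes> x \<otimes> inv g)"
    unfolding max_subgroups_containing_def N
    using maximal_subgroup_conj[OF g M(1)] conj_mem_conj_set_iff g x M(2) by blast
qed

lemma rcoset_stabiliser_iff:
  assumes H: "subgroup H G" and x: "x \<in> carrier G" and h: "h \<in> carrier G"
  shows "(H #> x) #> h = H #> x \<longleftrightarrow> h \<in> inv x <# H #> x"
proof -
  have HC: "H \<subseteq> carrier G" using H subgroup.subset by blast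
  have "(H #> x) #> h = H #> x \<longleftrightarrow> H #> (x \<otimes> h) = H #> x"
    using coset_mult_assoc[OF HC x h] by simp
  also have "\<dots> \<longleftrightarrow> x \<otimes> h \<in> H #> x"
    using rcos_self[of "x \<otimes> h" H] repr_independence[of "x \<otimes> h" H x] H x h by auto
  also have "\<dots> \<longleftrightarrow> x \<otimes> h \<otimes> inv x \<in> H"
    using subgroup.rcos_module[OF H is_group x] x h by simp
  also have "\<dots> \<longleftrightarrow> h \<in> inv x <# H #> x"
    using conj_mem_conj_set_iff[of "inv x" "x \<otimes> h \<otimes> inv x" H] x h HC
    by (simp add: inv_conj_conj)
  finally show ?thesis .
qed

lemma is_coset_base_iff:
  assumes "subgroup H G"
  shows "is_coset_base G H B \<longleftrightarrow>
    B \<subseteq> rcosets H \<and> (\<forall>a\<in>carrier G. a \<noteq> \<one> \<longrightarrow> (\<exists>C\<in>B. C #> a \<noteq> C))"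
proof -
  have "C #> \<one> = C" if "C \<in> rcosets H" for C
    using subgroup.rcosets_carrier[OF assms is_group that] by simp
  then show ?thesis unfolding is_coset_base_def by blast
qed

lemma rcosets_is_coset_base_if_core_free:
  assumes H: "subgroup H G" and "core_free G H"
  shows "is_coset_base G H (rcosets H)"
  unfolding is_coset_base_iff[OF H]
proof (intro conjI ballI impI subset_refl)
  fix a assume a: "a \<in> carrier G" "a \<noteq> \<one>"
  then obtain g where g: "g \<in> carrier G" "a \<notin> g <# H #> inv g"
    using \<open>core_free G H\<close> conj_set_eq unfolding core_free_def by blast
  then have "(H #> inv g) #> a \<noteq> H #> inv g"
    using rcoset_stabiliser_iff[OF H _ a(1), of "inv g"] by simp
  moreover have "H #> inv g \<in> rcosets H"
    using rcosetsI subgroup.subset[OF H] g(1) by simp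
  ultimately show "\<exists>C\<in>rcosets H. C #> a \<noteq> C" by blast
qed

end

locale unique_maximal_subgroup = group G for G (structure) +
  fixes s :: 'a and H :: "'a set"
  assumes finite_carrier: "finite (carrier G)"
    and s_carrier: "s \<in> carrier G"
    and max_subgroups_s: "max_subgroups_containing G s = {H}"
begin

lemma subgroup_H: "subgroup H G"
  using max_subgroups_s unfolding max_subgroups_containing_def maximal_subgroup_def by auto

lemma generate_conj_eq_carrier_iff:
  assumes g: "g \<in> carrier G" and a: "a \<in> carrier G"
  shows "generate G {a, g \<otimes> s \<otimes> inv g} = carrier G \<longleftrightarrow> (H #> inv g) #> a \<noteq> H #> inv g"
proof -
  have "max_subgroups_containing G (g \<otimes> s \<otimes> inv g) = {g <# H #> inv g}"
    using max_subgroups_containing_conj[OF g s_carrier] max_subgroups_s by simp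
  then show ?thesis
    using generate_pair_eq_carrier_iff[OF finite_carrier a] rcoset_stabiliser_iff[OF subgroup_H _ a]
      g s_carrier by simp
qed

lemma coset_base_from_total_dominating:
  assumes S: "S \<subseteq> conjugates G s" "total_dominating G S"
  shows "\<exists>B. is_coset_base G H B \<and> card B \<le> card S"
proof -
  have "\<forall>y\<in>S. \<exists>g. g \<in> carrier G \<and> y = g \<otimes> s \<otimes> inv g"
    using S(1) unfolding conjugates_def by blast
  then obtain r where r_carrier: "\<And>y. y \<in> S \<Longrightarrow> r y \<in> carrier G"
    and r_conj: "\<And>y. y \<in> S \<Longrightarrow> y = r y \<otimes> s \<otimes> inv (r y)"
    by metis
  let ?B = "(\<lambda>y. H #> inv (r y)) ` S"
  have "finite S"
    using S(2) finite_carrier rev_finite_subset unfolding total_dominating_def nonid_def by blast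
  have "is_coset_base G H ?B"
    unfolding is_coset_base_iff[OF subgroup_H]
  proof (intro conjI ballI impI)
    show "?B \<subseteq> rcosets H"
      using r_carrier rcosetsI subgroup.subset[OF subgroup_H] by auto
    fix a assume a: "a \<in> carrier G" "a \<noteq> \<one>"
    then obtain y where y: "y \<in> S" "generate G {a, y} = carrier G"
      using S(2) unfolding total_dominating_def nonid_def by blast
    then have "(H #> inv (r y)) #> a \<noteq> H #> inv (r y)"
      using generate_conj_eq_carrier_iff[OF r_carrier[OF y(1)] a(1)] r_conj[OF y(1)] by simp
    then show "\<exists>C\<in>?B. C #> a \<noteq> C" using y(1) by blast
  qed
  moreover have "card ?B \<le> card S" using card_image_le[OF \<open>finite S\<close>] .
  ultimately show ?thesis by blast
qed

lemma total_dominating_from_coset_base: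
  assumes "s \<noteq> \<one>" and B: "is_coset_base G H B"
  shows "\<exists>S. S \<subseteq> conjugates G s \<and> total_dominating G S \<and> card S \<le> card B"
proof -
  have BH: "B \<subseteq> rcosets H" and moves: "\<And>a. a \<in> carrier G \<Longrightarrow> a \<noteq> \<one> \<Longrightarrow> \<exists>C\<in>B. C #> a \<noteq> C"
    using B is_coset_base_iff[OF subgroup_H] by auto
  have "\<exists>g. g \<in> carrier G \<and> C = H #> inv g" if "C \<in> B" for C
  proof -
    obtain x where "x \<in> carrier G" "C = H #> x"
      using \<open>C \<in> B\<close> BH unfolding RCOSETS_def by blast
    then show ?thesis by (intro exI[of _ "inv x"]) simp
  qed
  then obtain r where r_carrier: "\<And>C. C \<in> B \<Longrightarrow> r C \<in> carrier G"
    and r_coset: "\<And>C. C \<in> B \<Longrightarrow> C = H #> inv (r C)"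
    by metis
  let ?S = "(\<lambda>C. r C \<otimes> s \<otimes> inv (r C)) ` B"
  have "finite B"
    using BH rcosets_subset_PowG[OF subgroup_H] finite_carrier
    by (meson finite_Pow_iff finite_subset)
  have "?S \<subseteq> conjugates G s" unfolding conjugates_def using r_carrier by blast
  moreover have "total_dominating G ?S"
    unfolding total_dominating_def nonid_def
  proof (intro conjI ballI)
    show "?S \<subseteq> carrier G - {\<one>}"
      using r_carrier conj_eq_one_iff s_carrier \<open>s \<noteq> \<one>\<close> by auto
    fix a assume a: "a \<in> carrier G - {\<one>}"
    then obtain C where C: "C \<in> B" "C #> a \<noteq> C" using moves by blast
    then have "(H #> inv (r C)) #> a \<noteq> H #> inv (r C)" using r_coset[OF C(1)] by simp
    then have "generate G {a, r C \<otimes> s \<otimes> inv (r C)} = carrier G"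
      using generate_conj_eq_carrier_iff r_carrier C(1) a by simp
    then show "\<exists>y\<in>?S. generate G {a, y} = carrier G" using C(1) by blast
  qed
  moreover have "card ?S \<le> card B" using card_image_le[OF \<open>finite B\<close>] .
  ultimately show ?thesis by blast
qed

end

theorem corollary2p2:
  fixes G (structure) and s :: 'a and H :: "'a set"
  assumes "group G" and "finite (carrier G)"
    and "s \<in> carrier G" and "s \<noteq> \<one>"
    and "max_subgroups_containing G s = {H}"
    and "core_free G H"
  shows "base_size G H = min_conj_tds G s"
proof -
  interpret unique_maximal_subgroup G s H
    using assms by (simp add: unique_maximal_subgroup_def unique_maximal_subgroup_axioms_def)
  have "min_conj_tds G s =
      (LEAST n. \<exists>S. (S \<subseteq> conjugates G s \<and> total_dominating G S) \<and> card S = n)"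
    unfolding min_conj_tds_def by (simp add: conj_assoc)
  also have "\<dots> = base_size G H"
    unfolding base_size_def
  proof (rule Least_card_eq_if_mutually_dominated[symmetric])
    show "is_coset_base G H (rcosets H)"
      using rcosets_is_coset_base_if_core_free[OF subgroup_H \<open>core_free G H\<close>] .
  qed (use coset_base_from_total_dominating total_dominating_from_coset_base[OF \<open>s \<noteq> \<one>\<close>] in auto)
  finally show ?thesis ..
qed

end
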